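(* Let $p\ge1$, $u\in E^p$ and $\alpha,\beta\in\mathbb{R}$. Then $$D(\alpha u,\beta u)\le |\alpha-\beta|\,\max\{\|y\|: y\in[u]_0\}.$$
   Context: A fuzzy subset of $\mathbb{R}^p$ is a function $u:\mathbb{R}^p\to[0,1]$. Its $\alpha$-cut is $[u]_\alpha=\{x\in\mathbb{R}^p: u(x)\ge\alpha\}$ for $\alpha\in(0,1]$, and $[u]_0=\overline{\{x\in\mathbb{R}^p: u(x)>0\}}$. The set $E^p$ of $p$-dimensional fuzzy numbers consists of all fuzzy subsets $u$ of $\mathbb{R}^p$ such that $[u]_\alpha$ is a nonempty compact convex subset of $\mathbb{R}^p$ for every $\alpha\in[0,1]$. For $u\in E^p$ and $r\in\mathbb{R}$, $r u$ is the element of $E^p$ determined by $[r u]_\gamma=\{rx: x\in[u]_\gamma\}$ for all $\gamma\in[0,1]$. The sendograph of $u\in E^p$ is $\mathrm{send}\,u=\{(x,\gamma)\in[u]_0\times[0,1]: u(x)\ge\gamma\}\subset\mathbb{R}^{p+1}$. For nonempty compact $U,V\subset\mathbb{R}^{p+1}$ (with the Euclidean metric $d$), the Hausdorff metric is $H(U,V)=\max\{H^*(U,V),H^*(V,U)\}$ with $H^*(U,V)=\sup_{a\in U}\inf_{b\in V}d(a,b)$. The sendograph metric on $E^p$ is $D(u,v)=H(\mathrm{send}\,u,\mathrm{send}\,v)$. $\|\cdot\|$ is the Euclidean norm on $\mathbb{R}^p$. *)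

theory Defs
  imports "HOL-Analysis.Analysis"
begin

text \<open>Fuzzy subsets of a Euclidean space 'a (modelling R^p) are functions 'a => real
  with values in [0,1].\<close>

definition fuzzy_cut :: "('a::euclidean_space \<Rightarrow> real) \<Rightarrow> real \<Rightarrow> 'a set" where
  "fuzzy_cut u \<alpha> = (if \<alpha> = 0 then closure {x. u x > 0} else {x. u x \<ge> \<alpha>})"

definition fuzzy_number :: "('a::euclidean_space \<Rightarrow> real) \<Rightarrow> bool" where
  "fuzzy_number u \<longleftrightarrow> (\<forall>x. 0 \<le> u x \<and> u x \<le> 1) \<and>
     (\<forall>\<alpha>\<in>{0..1}. fuzzy_cut u \<alpha> \<noteq> {} \<and> compact (fuzzy_cut u \<alpha>) \<and> convex (fuzzy_cut u \<alpha>))"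

definition fuzzy_scale :: "real \<Rightarrow> ('a::euclidean_space \<Rightarrow> real) \<Rightarrow> ('a \<Rightarrow> real)" where
  "fuzzy_scale r u = (SOME v. fuzzy_number v \<and>
      (\<forall>\<gamma>\<in>{0..1}. fuzzy_cut v \<gamma> = (\<lambda>x. r *\<^sub>R x) ` fuzzy_cut u \<gamma>))"

definition sendograph :: "('a::euclidean_space \<Rightarrow> real) \<Rightarrow> ('a \<times> real) set" where
  "sendograph u = {(x, \<gamma>). x \<in> fuzzy_cut u 0 \<and> \<gamma> \<in> {0..1} \<and> u x \<ge> \<gamma>}"

definition hausdorff_semi :: "'b::metric_space set \<Rightarrow> 'b set \<Rightarrow> real" where
  "hausdorff_semi U V = (SUP a\<in>U. INF b\<in>V. dist a b)"

definition hausdorff_metric :: "'b::metric_space set \<Rightarrow> 'b set \<Rightarrow> real" where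
  "hausdorff_metric U V = max (hausdorff_semi U V) (hausdorff_semi V U)"

text \<open>Sendograph metric; the product metric on 'a \<times> real is the Euclidean one.\<close>
definition send_dist :: "('a::euclidean_space \<Rightarrow> real) \<Rightarrow> ('a \<Rightarrow> real) \<Rightarrow> real" where
  "send_dist u v = hausdorff_metric (sendograph u) (sendograph v)"

end

theory Submission
  imports Defs
begin

text \<open>Every point of the sendograph of \<open>\<alpha> u\<close> has the form \<open>(\<alpha> y, \<gamma>)\<close> with \<open>y \<in> [u]\<^sub>\<gamma>\<close>;
  it is matched by the point \<open>(\<beta> y, \<gamma>)\<close> of the sendograph of \<open>\<beta> u\<close>, at distance
  \<open>\<bar>\<alpha> - \<beta>\<bar> \<parallel>y\<parallel>\<close>, and \<open>y \<in> [u]\<^sub>0\<close> because the cuts decrease in \<open>\<gamma>\<close>. The same matching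
  in the other direction bounds the second half of the Hausdorff distance.\<close>

lemma hausdorff_semi_le:
  fixes U V :: "'b::metric_space set"
  assumes "U \<noteq> {}" and "\<And>a. a \<in> U \<Longrightarrow> \<exists>b\<in>V. dist a b \<le> c"
  shows "hausdorff_semi U V \<le> c"
  unfolding hausdorff_semi_def
proof (rule cSUP_least[OF \<open>U \<noteq> {}\<close>])
  fix a assume "a \<in> U"
  then obtain b where b: "b \<in> V" "dist a b \<le> c" using assms(2) by blast
  have "(INF b\<in>V. dist a b) \<le> dist a b"
    by (rule cINF_lower[OF _ b(1)]) (auto intro: bdd_belowI[of _ 0])
  then show "(INF b\<in>V. dist a b) \<le> c" using b(2) by linarith
qed

lemma fuzzy_cut_mono_zero:
  assumes "\<gamma> \<ge> 0"
  shows "fuzzy_cut u \<gamma> \<subseteq> fuzzy_cut u 0"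
proof (cases "\<gamma> = 0")
  case False
  then have "fuzzy_cut u \<gamma> \<subseteq> {x. u x > 0}" using assms by (auto simp: fuzzy_cut_def)
  then show ?thesis using closure_subset[of "{x. u x > 0}"] by (auto simp: fuzzy_cut_def)
qed simp

lemma sendograph_eq_cuts:
  assumes "\<And>x. 0 \<le> u x"
  shows "sendograph u = {(x, \<gamma>). \<gamma> \<in> {0..1} \<and> x \<in> fuzzy_cut u \<gamma>}"
proof -
  have "x \<in> fuzzy_cut u 0" if "\<gamma> \<in> {0..1}" "x \<in> fuzzy_cut u \<gamma>" for x \<gamma>
    using that fuzzy_cut_mono_zero[of \<gamma> u] by auto
  moreover have "x \<in> fuzzy_cut u \<gamma>" if "\<gamma> \<in> {0..1}" "u x \<ge> \<gamma>" "x \<in> fuzzy_cut u 0" for x \<gamma>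
    using that by (cases "\<gamma> = 0") (auto simp: fuzzy_cut_def)
  moreover have "u x \<ge> \<gamma>" if "\<gamma> \<in> {0..1}" "x \<in> fuzzy_cut u \<gamma>" for x \<gamma>
    using that assms[of x] by (cases "\<gamma> = 0") (auto simp: fuzzy_cut_def)
  ultimately show ?thesis unfolding sendograph_def by blast
qed

lemma Collect_scaleR_inverse:
  fixes r :: real
  assumes "r \<noteq> 0"
  shows "{x::'a::real_vector. P (inverse r *\<^sub>R x)} = (\<lambda>y. r *\<^sub>R y) ` {y. P y}"
proof (rule set_eqI)
  fix x :: 'a
  have "x = r *\<^sub>R (inverse r *\<^sub>R x)" using assms by simp
  then show "x \<in> {x. P (inverse r *\<^sub>R x)} \<longleftrightarrow> x \<in> (\<lambda>y. r *\<^sub>R y) ` {y. P y}"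
    using assms by force
qed

lemma fuzzy_cut_scaleR_inverse:
  fixes u :: "'a::euclidean_space \<Rightarrow> real"
  assumes "r \<noteq> 0"
  shows "fuzzy_cut (\<lambda>x. u (inverse r *\<^sub>R x)) \<gamma> = (\<lambda>x. r *\<^sub>R x) ` fuzzy_cut u \<gamma>"
proof (cases "\<gamma> = 0")
  case True
  have lin: "linear (\<lambda>x::'a. r *\<^sub>R x)" by (simp add: linear_scaleR)
  have inj: "inj (\<lambda>x::'a. r *\<^sub>R x)" using assms by (auto simp: inj_on_def)
  have "fuzzy_cut (\<lambda>x. u (inverse r *\<^sub>R x)) \<gamma> = closure ((\<lambda>x. r *\<^sub>R x) ` {y. u y > 0})"
    using True Collect_scaleR_inverse[OF assms, of "\<lambda>y. u y > 0"] by (simp add: fuzzy_cut_def)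
  also have "\<dots> = (\<lambda>x. r *\<^sub>R x) ` closure {y. u y > 0}"
    using closure_injective_linear_image[OF lin inj] by simp
  finally show ?thesis using True by (simp add: fuzzy_cut_def)
next
  case False
  then show ?thesis
    using Collect_scaleR_inverse[OF assms, of "\<lambda>y. u y \<ge> \<gamma>"] by (simp add: fuzzy_cut_def)
qed

lemma fuzzy_number_scaled_cuts:
  fixes u :: "'a::euclidean_space \<Rightarrow> real"
  assumes "fuzzy_number u"
    and "\<And>\<gamma>. \<gamma> \<in> {0..1} \<Longrightarrow> fuzzy_cut v \<gamma> = (\<lambda>x. r *\<^sub>R x) ` fuzzy_cut u \<gamma>"
    and "\<And>x. 0 \<le> v x \<and> v x \<le> 1"
  shows "fuzzy_number v"
  using assms unfolding fuzzy_number_def by (auto intro: compact_scaling convex_scaling)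

lemma ex_fuzzy_scale:
  fixes u :: "'a::euclidean_space \<Rightarrow> real"
  assumes u: "fuzzy_number u"
  shows "\<exists>v. fuzzy_number v \<and>
      (\<forall>\<gamma>\<in>{0..1}. fuzzy_cut v \<gamma> = (\<lambda>x. r *\<^sub>R x) ` fuzzy_cut u \<gamma>)"
proof (cases "r = 0")
  case True
  define v :: "'a \<Rightarrow> real" where "v = (\<lambda>x. if x = 0 then 1 else 0)"
  have "fuzzy_cut v \<gamma> = (\<lambda>x. r *\<^sub>R x) ` fuzzy_cut u \<gamma>" if "\<gamma> \<in> {0..1}" for \<gamma>
  proof -
    have "fuzzy_cut u \<gamma> \<noteq> {}" using u that by (auto simp: fuzzy_number_def)
    then show ?thesis using True that by (auto simp: fuzzy_cut_def v_def)
  qed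
  moreover have "0 \<le> v x \<and> v x \<le> 1" for x by (simp add: v_def)
  ultimately show ?thesis using fuzzy_number_scaled_cuts[OF u] by blast
next
  case False
  define v where "v = (\<lambda>x. u (inverse r *\<^sub>R x))"
  have "0 \<le> v x \<and> v x \<le> 1" for x using u by (simp add: v_def fuzzy_number_def)
  then show ?thesis
    using fuzzy_number_scaled_cuts[OF u] fuzzy_cut_scaleR_inverse[OF False, of u]
    unfolding v_def by blast
qed

lemma
  fixes u :: "'a::euclidean_space \<Rightarrow> real"
  assumes "fuzzy_number u"
  shows fuzzy_number_fuzzy_scale: "fuzzy_number (fuzzy_scale r u)"
    and fuzzy_cut_fuzzy_scale:
      "\<gamma> \<in> {0..1} \<Longrightarrow> fuzzy_cut (fuzzy_scale r u) \<gamma> = (\<lambda>x. r *\<^sub>R x) ` fuzzy_cut u \<gamma>"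
  using someI_ex[OF ex_fuzzy_scale[OF assms, of r]] unfolding fuzzy_scale_def by auto

lemma sendograph_fuzzy_scale:
  fixes u :: "'a::euclidean_space \<Rightarrow> real"
  assumes "fuzzy_number u"
  shows "sendograph (fuzzy_scale r u) = {(r *\<^sub>R y, \<gamma>) | y \<gamma>. \<gamma> \<in> {0..1} \<and> y \<in> fuzzy_cut u \<gamma>}"
proof -
  have "\<And>x. 0 \<le> fuzzy_scale r u x"
    using fuzzy_number_fuzzy_scale[OF assms] by (simp add: fuzzy_number_def)
  then show ?thesis
    using fuzzy_cut_fuzzy_scale[OF assms] by (auto simp: sendograph_eq_cuts)
qed

lemma hausdorff_semi_sendograph_fuzzy_scale_le:
  fixes u :: "'a::euclidean_space \<Rightarrow> real"
  assumes u: "fuzzy_number u"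
  shows "hausdorff_semi (sendograph (fuzzy_scale \<alpha> u)) (sendograph (fuzzy_scale \<beta> u))
           \<le> \<bar>\<alpha> - \<beta>\<bar> * (SUP y\<in>fuzzy_cut u 0. norm y)"
proof (rule hausdorff_semi_le)
  let ?M = "SUP y\<in>fuzzy_cut u 0. norm y"
  have "compact (fuzzy_cut u 0)" using u by (auto simp: fuzzy_number_def)
  then have bdd: "bdd_above (norm ` fuzzy_cut u 0)"
    by (meson bdd_above_norm compact_imp_bounded)
  have "fuzzy_cut u 0 \<noteq> {}" using u by (simp add: fuzzy_number_def)
  then obtain y0 where "y0 \<in> fuzzy_cut u 0" by blast
  then have "(\<alpha> *\<^sub>R y0, 0) \<in> sendograph (fuzzy_scale \<alpha> u)"
    by (auto simp: sendograph_fuzzy_scale[OF u])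
  then show "sendograph (fuzzy_scale \<alpha> u) \<noteq> {}" by blast
  fix a assume "a \<in> sendograph (fuzzy_scale \<alpha> u)"
  then obtain y \<gamma> where a: "a = (\<alpha> *\<^sub>R y, \<gamma>)" and g: "\<gamma> \<in> {0..1}" and y: "y \<in> fuzzy_cut u \<gamma>"
    by (auto simp: sendograph_fuzzy_scale[OF u])
  have b: "(\<beta> *\<^sub>R y, \<gamma>) \<in> sendograph (fuzzy_scale \<beta> u)"
    using g y by (auto simp: sendograph_fuzzy_scale[OF u])
  have "dist a (\<beta> *\<^sub>R y, \<gamma>) = \<bar>\<alpha> - \<beta>\<bar> * norm y"
    by (simp add: a dist_Pair_Pair dist_norm flip: scaleR_diff_left)
  also have "\<dots> \<le> \<bar>\<alpha> - \<beta>\<bar> * ?M"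
    using fuzzy_cut_mono_zero[of \<gamma> u] g y bdd by (auto intro!: mult_left_mono cSUP_upper)
  finally show "\<exists>b\<in>sendograph (fuzzy_scale \<beta> u). dist a b \<le> \<bar>\<alpha> - \<beta>\<bar> * ?M"
    using b by blast
qed

theorem theorem2p3:
  fixes u :: "'a::euclidean_space \<Rightarrow> real" and \<alpha> \<beta> :: real
  assumes "fuzzy_number u"
  shows "send_dist (fuzzy_scale \<alpha> u) (fuzzy_scale \<beta> u)
           \<le> \<bar>\<alpha> - \<beta>\<bar> * (SUP y\<in>fuzzy_cut u 0. norm y)"
  using hausdorff_semi_sendograph_fuzzy_scale_le[OF assms, of \<alpha> \<beta>]
    hausdorff_semi_sendograph_fuzzy_scale_le[OF assms, of \<beta> \<alpha>]
  unfolding send_dist_def hausdorff_metric_def by (simp add: abs_minus_commute)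

end
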